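(* Let $H$ be a real Hilbert space, $A$ a strictly positive selfadjoint operator on $H$ with $\lambda_1>0$ the minimum of its spectrum, $\alpha,\beta,\gamma,\kappa>0$ with $\mu=\gamma-\alpha\beta\ge0$, and $\eta\in\mathbb R$ with $\eta^2>\mathfrak t(\kappa)\mu$, where $$\mathfrak t(\kappa)=\begin{cases}\frac{2\kappa}{\alpha^2}\big(1-\frac{\alpha}{\kappa\lambda_1}+\frac{\alpha^2}{\kappa^2\lambda_1^2}\big)&\kappa<\alpha/\lambda_1,\\ \frac{2\kappa}{\alpha^2}&\kappa\ge\alpha/\lambda_1.\end{cases}$$ For solutions $(u,\theta)$ of $u_{ttt}+\alpha u_{tt}+\beta A u_t+\gamma A u=\eta A\theta$, $\theta_t+\kappa A\theta=-\eta A u_{tt}-\alpha\eta A u_t$, define $$\mathsf W=\frac{\gamma}{\alpha}\|u_t+\alpha u\|_1^2+\|u_{tt}+\alpha u_t\|^2-\frac{\mu}{\alpha}\|u_t\|_1^2+\|\theta\|^2,$$ $$\mathsf F=\eta\langle\theta,u_t\rangle+\frac{\eta^2}{2}\|u_t\|_1^2+\frac12\|\theta\|_{-1}^2,\qquad \mathsf G=-\langle u_t-\alpha u,u_{tt}+\alpha u_t\rangle,$$ $\mathsf L=\mathsf W+\rho\mathsf F+\varepsilon^2\mathsf G$ for $\rho,\varepsilon>0$, and $\mathcal E=\frac12[\|u_t+\alpha u\|_1^2+\|u_{tt}+\alpha u_t\|^2+\|u_t\|_1^2+\|\theta\|^2]$. Then there exists $\rho>0$ with the following property: for every $\varepsilon>0$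 sufficiently small there is $\omega=\omega(\varepsilon)>0$ such that $\frac{d}{dt}\mathsf L+\omega\mathcal E\le0$ along every sufficiently regular solution.
   Context: $\|u\|_\sigma=\|A^{\sigma/2}u\|$ for $\sigma\in\mathbb R$; "sufficiently regular solution" means e.g. one with initial datum in the domain of the generator of the solution semigroup on $H^1\times H^1\times H\times H$. *)

theory Defs
  imports "HOL-Analysis.Analysis"
begin

text \<open>Unbounded linear operators on a real Hilbert space are represented as a pair
  (domain D, map T), the values of T outside D being irrelevant.\<close>

definition linear_op :: "'h::real_inner set \<Rightarrow> ('h \<Rightarrow> 'h) \<Rightarrow> bool" where
  "linear_op D T \<longleftrightarrow> subspace D \<and>
     (\<forall>x\<in>D. \<forall>y\<in>D. T (x + y) = T x + T y) \<and> (\<forall>c. \<forall>x\<in>D. T (c *\<^sub>R x) = c *\<^sub>R T x)"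

text \<open>Selfadjoint: densely defined, symmetric, and the domain of the adjoint is contained
  in D (hence the adjoint equals T).\<close>
definition selfadjoint_op :: "'h::real_inner set \<Rightarrow> ('h \<Rightarrow> 'h) \<Rightarrow> bool" where
  "selfadjoint_op D T \<longleftrightarrow> linear_op D T \<and> closure D = UNIV \<and>
     (\<forall>x\<in>D. \<forall>y\<in>D. inner (T x) y = inner x (T y)) \<and>
     (\<forall>y z. (\<forall>x\<in>D. inner (T x) y = inner x z) \<longrightarrow> y \<in> D)"

definition strictly_positive_op :: "'h::real_inner set \<Rightarrow> ('h \<Rightarrow> 'h) \<Rightarrow> bool" where
  "strictly_positive_op D T \<longleftrightarrow> (\<forall>x\<in>D. x \<noteq> 0 \<longrightarrow> inner (T x) x > 0)"

definition positive_op :: "'h::real_inner set \<Rightarrow> ('h \<Rightarrow> 'h) \<Rightarrow> bool" where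
  "positive_op D T \<longleftrightarrow> (\<forall>x\<in>D. inner (T x) x \<ge> 0)"

definition op_spectrum :: "'h::real_inner set \<Rightarrow> ('h \<Rightarrow> 'h) \<Rightarrow> real set" where
  "op_spectrum D T = {l. \<not> (bij_betw (\<lambda>x. T x - l *\<^sub>R x) D UNIV \<and>
       (\<exists>C. \<forall>x\<in>D. norm x \<le> C * norm (T x - l *\<^sub>R x)))}"

text \<open>Inverse of an operator (used for A^(-1/2) = inverse of A^(1/2)).\<close>
definition op_inv :: "'h set \<Rightarrow> ('h \<Rightarrow> 'h) \<Rightarrow> 'h \<Rightarrow> 'h" where
  "op_inv D T y = (THE x. x \<in> D \<and> T x = y)"

definition tfun :: "real \<Rightarrow> real \<Rightarrow> real \<Rightarrow> real" where
  "tfun \<alpha> l1 \<kappa> = (if \<kappa> < \<alpha> / l1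
      then 2 * \<kappa> / \<alpha>\<^sup>2 * (1 - \<alpha> / (\<kappa> * l1) + \<alpha>\<^sup>2 / (\<kappa>\<^sup>2 * l1\<^sup>2))
      else 2 * \<kappa> / \<alpha>\<^sup>2)"

text \<open>Sufficiently regular (classical) solution on [0,oo): state (u, v = u_t, w = u_tt, th)
  stays in the domain of the generator, u and v are differentiable in H^1 (norm of S = A^(1/2)),
  w and th in H, and the equations hold, with A applied to the combinations lying in D(A).\<close>
definition regular_solution ::
  "'h::real_inner set \<Rightarrow> ('h \<Rightarrow> 'h) \<Rightarrow> 'h set \<Rightarrow> ('h \<Rightarrow> 'h) \<Rightarrow> real \<Rightarrow> real \<Rightarrow> real \<Rightarrow> real \<Rightarrow> real
    \<Rightarrow> (real \<Rightarrow> 'h) \<Rightarrow> (real \<Rightarrow> 'h) \<Rightarrow> (real \<Rightarrow> 'h) \<Rightarrow> (real \<Rightarrow> 'h) \<Rightarrow> bool" where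
  "regular_solution DA A DS S \<alpha> \<beta> \<gamma> \<kappa> \<eta> u v w th \<longleftrightarrow> (\<forall>t\<ge>0.
     u t \<in> DS \<and> v t \<in> DS \<and> w t \<in> DS \<and>
     \<beta> *\<^sub>R v t + \<gamma> *\<^sub>R u t - \<eta> *\<^sub>R th t \<in> DA \<and>
     \<kappa> *\<^sub>R th t + \<eta> *\<^sub>R w t + (\<alpha> * \<eta>) *\<^sub>R v t \<in> DA \<and>
     (u has_vector_derivative v t) (at t within {0..}) \<and>
     ((\<lambda>s. S (u s)) has_vector_derivative S (v t)) (at t within {0..}) \<and>
     (v has_vector_derivative w t) (at t within {0..}) \<and>
     ((\<lambda>s. S (v s)) has_vector_derivative S (w t)) (at t within {0..}) \<and>
     (w has_vector_derivative
        (- (\<alpha> *\<^sub>R w t) - A (\<beta> *\<^sub>R v t + \<gamma> *\<^sub>R u t - \<eta> *\<^sub>R th t))) (at t within {0..}) \<and>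
     (th has_vector_derivative
        (- A (\<kappa> *\<^sub>R th t + \<eta> *\<^sub>R w t + (\<alpha> * \<eta>) *\<^sub>R v t))) (at t within {0..}))"

definition Wfun :: "('h::real_inner \<Rightarrow> 'h) \<Rightarrow> real \<Rightarrow> real \<Rightarrow> real \<Rightarrow> 'h \<Rightarrow> 'h \<Rightarrow> 'h \<Rightarrow> 'h \<Rightarrow> real" where
  "Wfun S \<alpha> \<beta> \<gamma> x v w th =
     \<gamma> / \<alpha> * (norm (S (v + \<alpha> *\<^sub>R x)))\<^sup>2 + (norm (w + \<alpha> *\<^sub>R v))\<^sup>2
     - (\<gamma> - \<alpha> * \<beta>) / \<alpha> * (norm (S v))\<^sup>2 + (norm th)\<^sup>2"

definition Ffun :: "'h::real_inner set \<Rightarrow> ('h \<Rightarrow> 'h) \<Rightarrow> real \<Rightarrow> 'h \<Rightarrow> 'h \<Rightarrow> real" where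
  "Ffun DS S \<eta> v th = \<eta> * inner th v + \<eta>\<^sup>2 / 2 * (norm (S v))\<^sup>2
     + 1 / 2 * (norm (op_inv DS S th))\<^sup>2"

definition Gfun :: "real \<Rightarrow> 'h::real_inner \<Rightarrow> 'h \<Rightarrow> 'h \<Rightarrow> real" where
  "Gfun \<alpha> x v w = - inner (v - \<alpha> *\<^sub>R x) (w + \<alpha> *\<^sub>R v)"

definition Lfun :: "'h::real_inner set \<Rightarrow> ('h \<Rightarrow> 'h) \<Rightarrow> real \<Rightarrow> real \<Rightarrow> real \<Rightarrow> real \<Rightarrow> real \<Rightarrow> real
    \<Rightarrow> 'h \<Rightarrow> 'h \<Rightarrow> 'h \<Rightarrow> 'h \<Rightarrow> real" where
  "Lfun DS S \<alpha> \<beta> \<gamma> \<eta> \<rho> \<epsilon> x v w th =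
     Wfun S \<alpha> \<beta> \<gamma> x v w th + \<rho> * Ffun DS S \<eta> v th + \<epsilon>\<^sup>2 * Gfun \<alpha> x v w"

definition Efun :: "('h::real_inner \<Rightarrow> 'h) \<Rightarrow> real \<Rightarrow> 'h \<Rightarrow> 'h \<Rightarrow> 'h \<Rightarrow> 'h \<Rightarrow> real" where
  "Efun S \<alpha> x v w th = 1 / 2 * ((norm (S (v + \<alpha> *\<^sub>R x)))\<^sup>2 + (norm (w + \<alpha> *\<^sub>R v))\<^sup>2
     + (norm (S v))\<^sup>2 + (norm th)\<^sup>2)"

end

theory Submission
  imports Defs
begin

text \<open>Along a solution, the derivatives of W, F and G are explicit quadratic forms in
  V = S u_t, T = S \<theta>, P = S (u_t + \<alpha> u), q = u_tt + \<alpha> u_t, u_t and \<theta>: every A is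
  split as S S between the two factors of an inner product. The bottom \<lambda>1 of the spectrum
  gives the Poincare inequalities \<lambda>1 |u_t|^2 <= |V|^2 and \<lambda>1 |\<theta>|^2 <= |T|^2. With them,
  weighted Young inequalities give W' + \<rho> F' <= -c (|V|^2 + |T|^2 + |\<theta>|^2) for a
  suitable \<rho>, and such a \<rho> exists as soon as \<eta>^2 > t(\<kappa>) \<mu>. Since moreover
  G' <= -|q|^2/2 - \<gamma>/(4\<alpha>) |P|^2 + K (|V|^2 + |T|^2), for \<epsilon>^2 K <= c/2 the derivative L'
  is bounded by a negative multiple of the energy.\<close>

section \<open>Spectral lower bound of a symmetric operator\<close>

lemma linear_op_zero: "linear_op D T \<Longrightarrow> T 0 = 0"
  unfolding linear_op_def by (metis scale_zero_left subspace_0)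

lemma linear_op_diff:
  assumes "linear_op D T" "x \<in> D" "y \<in> D"
  shows "T (x - y) = T x - T y"
proof -
  have "(-1) *\<^sub>R y \<in> D" using assms unfolding linear_op_def by (blast intro: subspace_scale)
  then have "T (x + (-1) *\<^sub>R y) = T x + T ((-1) *\<^sub>R y)" "T ((-1) *\<^sub>R y) = (-1) *\<^sub>R T y"
    using assms unfolding linear_op_def by blast+
  then show ?thesis by simp
qed

lemma linear_op_shift:
  assumes "linear_op D T"
  shows "linear_op D (\<lambda>x. T x - m *\<^sub>R x)"
  using assms by (simp add: linear_op_def algebra_simps)

lemma strictly_positive_imp_positive_op: "strictly_positive_op D T \<Longrightarrow> positive_op D T"
  unfolding strictly_positive_op_def positive_op_def by (metis inner_zero_right order.refl less_imp_le)

lemma quadratic_nonneg_imp_discriminant_le: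
  fixes a b c :: real
  assumes nonneg: "\<And>t. 0 \<le> a + 2 * t * b + t\<^sup>2 * c" and "0 \<le> c"
  shows "b\<^sup>2 \<le> a * c"
proof (cases "c = 0")
  case False
  then have "0 < c" using \<open>0 \<le> c\<close> by simp
  have "0 \<le> a + 2 * (- b / c) * b + (- b / c)\<^sup>2 * c" by (rule nonneg)
  also have "\<dots> = a - b\<^sup>2 / c" using \<open>0 < c\<close> by (simp add: field_simps power2_eq_square)
  finally show ?thesis using \<open>0 < c\<close> by (simp add: field_simps)
next
  case True
  have "b = 0"
  proof (rule ccontr)
    assume "b \<noteq> 0"
    have "0 \<le> a + 2 * (- (a + 1) / (2 * b)) * b + (- (a + 1) / (2 * b))\<^sup>2 * c" by (rule nonneg)
    also have "\<dots> = -1" using \<open>b \<noteq> 0\<close> True by (simp add: field_simps)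
    finally show False by simp
  qed
  then show ?thesis using True by simp
qed

lemma positive_symmetric_cauchy_schwarz:
  assumes lin: "linear_op D B" and sym: "\<forall>x\<in>D. \<forall>y\<in>D. inner (B x) y = inner x (B y)"
    and pos: "positive_op D B" and "x \<in> D" "y \<in> D"
  shows "(inner (B x) y)\<^sup>2 \<le> inner (B x) x * inner (B y) y"
proof (rule quadratic_nonneg_imp_discriminant_le)
  fix t :: real
  have "t *\<^sub>R y \<in> D" "x + t *\<^sub>R y \<in> D"
    using lin \<open>x \<in> D\<close> \<open>y \<in> D\<close> by (simp_all add: linear_op_def subspace_add subspace_scale)
  then have "0 \<le> inner (B (x + t *\<^sub>R y)) (x + t *\<^sub>R y)"
    using pos by (simp add: positive_op_def)
  moreover have "inner (B y) x = inner (B x) y"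
    using sym \<open>x \<in> D\<close> \<open>y \<in> D\<close> by (simp add: inner_commute)
  ultimately show "0 \<le> inner (B x) x + 2 * t * inner (B x) y + t\<^sup>2 * inner (B y) y"
    using lin \<open>x \<in> D\<close> \<open>y \<in> D\<close> \<open>t *\<^sub>R y \<in> D\<close>
    by (simp add: linear_op_def inner_add_left inner_add_right power2_eq_square algebra_simps)
  show "0 \<le> inner (B y) y" using pos \<open>y \<in> D\<close> by (simp add: positive_op_def)
qed

lemma positive_symmetric_bounded_inverse_coercive:
  assumes lin: "linear_op D B" and sym: "\<forall>x\<in>D. \<forall>y\<in>D. inner (B x) y = inner x (B y)"
    and pos: "positive_op D B" and surj: "\<forall>z. \<exists>y\<in>D. B y = z"
    and bound: "\<forall>y\<in>D. norm y \<le> C * norm (B y)" and "x \<in> D"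
  shows "(norm x)\<^sup>2 \<le> C * inner (B x) x"
proof (cases "x = 0")
  case False
  obtain y where "y \<in> D" "B y = x" using surj by blast
  have "0 \<le> inner (B x) x" using pos \<open>x \<in> D\<close> by (simp add: positive_op_def)
  have "inner (B y) y \<le> C * (norm x)\<^sup>2"
  proof -
    have "inner (B y) y \<le> norm x * norm y" using \<open>B y = x\<close> by (simp add: norm_cauchy_schwarz)
    also have "\<dots> \<le> norm x * (C * norm x)"
      using bound \<open>y \<in> D\<close> \<open>B y = x\<close> by (intro mult_left_mono) auto
    finally show ?thesis by (simp add: power2_eq_square mult_ac)
  qed
  have "((norm x)\<^sup>2)\<^sup>2 = (inner (B y) x)\<^sup>2" using \<open>B y = x\<close> by (simp add: power2_norm_eq_inner)
  also have "\<dots> \<le> inner (B y) y * inner (B x) x"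
    using positive_symmetric_cauchy_schwarz[OF lin sym pos \<open>y \<in> D\<close> \<open>x \<in> D\<close>] .
  also have "\<dots> \<le> C * (norm x)\<^sup>2 * inner (B x) x"
    using \<open>inner (B y) y \<le> C * (norm x)\<^sup>2\<close> \<open>0 \<le> inner (B x) x\<close> by (rule mult_right_mono)
  finally have "(norm x)\<^sup>2 * (norm x)\<^sup>2 \<le> (norm x)\<^sup>2 * (C * inner (B x) x)"
    by (simp add: power2_eq_square mult_ac)
  then show ?thesis by (rule mult_left_le_imp_le) (use False in simp)
qed (simp add: linear_op_zero[OF lin])

lemma resolvent_shift_coercive:
  assumes lin: "linear_op D A" and sym: "\<forall>x\<in>D. \<forall>y\<in>D. inner (A x) y = inner x (A y)"
    and lower: "\<And>z. z \<in> D \<Longrightarrow> m * (norm z)\<^sup>2 \<le> inner (A z) z" and "m \<notin> op_spectrum D A"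
  obtains C where "0 < C" "\<And>z. z \<in> D \<Longrightarrow> (norm z)\<^sup>2 \<le> C * (inner (A z) z - m * (norm z)\<^sup>2)"
proof -
  have bij: "bij_betw (\<lambda>y. A y - m *\<^sub>R y) D UNIV"
    and "\<exists>C. \<forall>y\<in>D. norm y \<le> C * norm (A y - m *\<^sub>R y)"
    using \<open>m \<notin> op_spectrum D A\<close> unfolding op_spectrum_def by auto
  then obtain C where bound: "\<forall>y\<in>D. norm y \<le> C * norm (A y - m *\<^sub>R y)" by blast
  have surj: "\<forall>z. \<exists>y\<in>D. A y - m *\<^sub>R y = z"
  proof
    fix z :: 'a
    have "z \<in> (\<lambda>y. A y - m *\<^sub>R y) ` D" using bij by (simp add: bij_betw_def)
    then show "\<exists>y\<in>D. A y - m *\<^sub>R y = z" by blast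
  qed
  have "positive_op D (\<lambda>y. A y - m *\<^sub>R y)"
    using lower by (simp add: positive_op_def inner_diff_left power2_norm_eq_inner)
  moreover have "\<forall>y\<in>D. \<forall>z\<in>D. inner (A y - m *\<^sub>R y) z = inner y (A z - m *\<^sub>R z)"
    using sym by (simp add: inner_diff_left inner_diff_right inner_commute)
  ultimately have coercive: "(norm z)\<^sup>2 \<le> C * (inner (A z) z - m * (norm z)\<^sup>2)" if "z \<in> D" for z
    using positive_symmetric_bounded_inverse_coercive[OF linear_op_shift[OF lin] _ _ surj bound that]
    by (simp add: inner_diff_left power2_norm_eq_inner)
  show ?thesis
  proof (rule that[of "max C 1"])
    fix z assume "z \<in> D"
    have "0 \<le> inner (A z) z - m * (norm z)\<^sup>2" using lower[OF \<open>z \<in> D\<close>] by simp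
    then have "C * (inner (A z) z - m * (norm z)\<^sup>2) \<le> max C 1 * (inner (A z) z - m * (norm z)\<^sup>2)"
      by (intro mult_right_mono) simp_all
    with coercive[OF \<open>z \<in> D\<close>] show "(norm z)\<^sup>2 \<le> max C 1 * (inner (A z) z - m * (norm z)\<^sup>2)"
      by linarith
  qed simp
qed

text \<open>The infimum m of the Rayleigh quotients lies in the spectrum: otherwise A - m would be
  coercive, and m + 1/C would be a larger lower bound.\<close>
lemma quadratic_form_ge_spectral_bound:
  assumes lin: "linear_op D A" and sym: "\<forall>x\<in>D. \<forall>y\<in>D. inner (A x) y = inner x (A y)"
    and pos: "positive_op D A" and l1_min: "\<forall>l\<in>op_spectrum D A. l1 \<le> l" and "x \<in> D"
  shows "l1 * (norm x)\<^sup>2 \<le> inner (A x) x"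
proof (rule ccontr)
  assume "\<not> ?thesis"
  then have x_below: "inner (A x) x < l1 * (norm x)\<^sup>2" by simp
  then have "x \<noteq> 0" by auto
  define R where "R = {inner (A z) z / (norm z)\<^sup>2 | z. z \<in> D \<and> z \<noteq> 0}"
  define m where "m = Inf R"
  have x_R: "inner (A x) x / (norm x)\<^sup>2 \<in> R" using \<open>x \<in> D\<close> \<open>x \<noteq> 0\<close> by (auto simp: R_def)
  have "bdd_below R"
    using pos unfolding R_def bdd_below_def positive_op_def by (auto intro!: exI[of _ 0])
  have m_le: "m * (norm z)\<^sup>2 \<le> inner (A z) z" if "z \<in> D" for z
  proof (cases "z = 0")
    case False
    then have "m \<le> inner (A z) z / (norm z)\<^sup>2"
      unfolding m_def using that \<open>bdd_below R\<close> by (intro cInf_lower) (auto simp: R_def)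
    then show ?thesis using False by (simp add: field_simps)
  qed (simp add: linear_op_zero[OF lin])
  have "m * (norm x)\<^sup>2 < l1 * (norm x)\<^sup>2" using m_le[OF \<open>x \<in> D\<close>] x_below by simp
  then have "m < l1" by (rule mult_right_less_imp_less) simp
  then have "m \<notin> op_spectrum D A" using l1_min by force
  then obtain C where "0 < C"
    and coercive: "\<And>z. z \<in> D \<Longrightarrow> (norm z)\<^sup>2 \<le> C * (inner (A z) z - m * (norm z)\<^sup>2)"
    using resolvent_shift_coercive[OF lin sym m_le] by blast
  have "m + 1 / C \<le> m"
    unfolding m_def
  proof (rule cInf_greatest)
    show "R \<noteq> {}" using x_R by auto
    fix r assume "r \<in> R"
    then obtain z where "z \<in> D" "z \<noteq> 0" and r: "r = inner (A z) z / (norm z)\<^sup>2" by (auto simp: R_def)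
    have "1 / C * (norm z)\<^sup>2 \<le> inner (A z) z - m * (norm z)\<^sup>2"
      using coercive[OF \<open>z \<in> D\<close>] \<open>0 < C\<close> by (simp add: field_simps)
    also have "\<dots> = (r - m) * (norm z)\<^sup>2" using \<open>z \<noteq> 0\<close> by (simp add: r field_simps)
    finally have "1 / C \<le> r - m" by (rule mult_right_le_imp_le) (use \<open>z \<noteq> 0\<close> in simp)
    then show "Inf R + 1 / C \<le> r" by (simp add: m_def)
  qed
  then show False using \<open>0 < C\<close> by simp
qed

section \<open>Energy identities\<close>

lemma regular_solutionD:
  assumes "regular_solution DA A DS S \<alpha> \<beta> \<gamma> \<kappa> \<eta> u v w th" "0 \<le> t"
  shows "u t \<in> DS" "v t \<in> DS" "w t \<in> DS"
    and "\<beta> *\<^sub>R v t + \<gamma> *\<^sub>R u t - \<eta> *\<^sub>R th t \<in> DA"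
    and "\<kappa> *\<^sub>R th t + \<eta> *\<^sub>R w t + (\<alpha> * \<eta>) *\<^sub>R v t \<in> DA"
    and "(u has_vector_derivative v t) (at t within {0..})"
    and "((\<lambda>s. S (u s)) has_vector_derivative S (v t)) (at t within {0..})"
    and "(v has_vector_derivative w t) (at t within {0..})"
    and "((\<lambda>s. S (v s)) has_vector_derivative S (w t)) (at t within {0..})"
    and "(w has_vector_derivative
        (- (\<alpha> *\<^sub>R w t) - A (\<beta> *\<^sub>R v t + \<gamma> *\<^sub>R u t - \<eta> *\<^sub>R th t))) (at t within {0..})"
    and "(th has_vector_derivative
        (- A (\<kappa> *\<^sub>R th t + \<eta> *\<^sub>R w t + (\<alpha> * \<eta>) *\<^sub>R v t))) (at t within {0..})"
  using assms unfolding regular_solution_def by blast+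

lemma has_real_derivative_inner:
  assumes "(f has_vector_derivative f') (at x within X)" "(g has_vector_derivative g') (at x within X)"
  shows "((\<lambda>s. inner (f s) (g s)) has_real_derivative inner (f x) g' + inner f' (g x)) (at x within X)"
  using bounded_bilinear.has_vector_derivative[OF bounded_bilinear_inner assms]
  by (simp add: has_real_derivative_iff_has_vector_derivative)

lemma has_real_derivative_norm_power2:
  assumes "(f has_vector_derivative f') (at x within X)"
  shows "((\<lambda>s. (norm (f s))\<^sup>2) has_real_derivative 2 * inner (f x) f') (at x within X)"
  using has_real_derivative_inner[OF assms assms] by (simp add: power2_norm_eq_inner inner_commute)

text \<open>The arguments of the rates stand for P = S (u_t + \<alpha> u), q = u_tt + \<alpha> u_t, V = S u_t,
  T = S \<theta>, v = u_t and th = \<theta>. With \<mu> = \<gamma> - \<alpha> \<beta> they are the time derivatives of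
  W, F, G and L along a solution, and E_state is the energy E in these variables.\<close>

definition W_rate :: "real \<Rightarrow> real \<Rightarrow> 'h::real_inner \<Rightarrow> 'h \<Rightarrow> real" where
  "W_rate \<mu> \<kappa> V T = 2 * \<mu> * (norm V)\<^sup>2 - 2 * \<kappa> * (norm T)\<^sup>2"

definition F_rate :: "real \<Rightarrow> real \<Rightarrow> real \<Rightarrow> 'h::real_inner \<Rightarrow> 'h \<Rightarrow> 'h \<Rightarrow> 'h \<Rightarrow> real" where
  "F_rate \<alpha> \<kappa> \<eta> V T v th =
     - \<eta> * \<kappa> * inner T V - \<alpha> * \<eta> * inner th v - \<alpha> * \<eta>\<^sup>2 * (norm V)\<^sup>2 - \<kappa> * (norm th)\<^sup>2"

definition G_rate :: "real \<Rightarrow> real \<Rightarrow> real \<Rightarrow> real \<Rightarrow> 'h::real_inner \<Rightarrow> 'h \<Rightarrow> 'h \<Rightarrow> 'h \<Rightarrow> 'h \<Rightarrow> real" where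
  "G_rate \<alpha> \<gamma> \<eta> \<mu> P q V T v =
     - (norm q)\<^sup>2 + 2 * \<alpha> * inner v q + (2 * \<gamma> + \<mu>) / \<alpha> * inner V P - 2 * \<mu> / \<alpha> * (norm V)\<^sup>2
     - 2 * \<eta> * inner V T - \<gamma> / \<alpha> * (norm P)\<^sup>2 + \<eta> * inner P T"

definition L_rate ::
    "real \<Rightarrow> real \<Rightarrow> real \<Rightarrow> real \<Rightarrow> real \<Rightarrow> real \<Rightarrow> real \<Rightarrow> 'h::real_inner \<Rightarrow> 'h \<Rightarrow> 'h \<Rightarrow> 'h \<Rightarrow> 'h \<Rightarrow> 'h \<Rightarrow> real"
  where "L_rate \<alpha> \<gamma> \<kappa> \<eta> \<mu> \<rho> \<epsilon> P q V T v th =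
    W_rate \<mu> \<kappa> V T + \<rho> * F_rate \<alpha> \<kappa> \<eta> V T v th + \<epsilon>\<^sup>2 * G_rate \<alpha> \<gamma> \<eta> \<mu> P q V T v"

definition E_state :: "'h::real_inner \<Rightarrow> 'h \<Rightarrow> 'h \<Rightarrow> 'h \<Rightarrow> real" where
  "E_state P q V th = 1/2 * ((norm P)\<^sup>2 + (norm q)\<^sup>2 + (norm V)\<^sup>2 + (norm th)\<^sup>2)"

text \<open>In the identities a, b, c, d stand for S u, S u_t, S u_tt, S \<theta>; the left-hand sides are
  the derivatives of W, F, G with every A moved onto both factors as S S.\<close>

lemma W_rate_identity:
  fixes a b c d :: "'h::real_inner"
  assumes "\<alpha> \<noteq> 0"
  shows "\<gamma> / \<alpha> * (2 * inner (b + \<alpha> *\<^sub>R a) (c + \<alpha> *\<^sub>R b))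
      + 2 * - inner (c + \<alpha> *\<^sub>R b) (\<beta> *\<^sub>R b + \<gamma> *\<^sub>R a - \<eta> *\<^sub>R d)
      - (\<gamma> - \<alpha> * \<beta>) / \<alpha> * (2 * inner b c)
      + 2 * - inner d (\<kappa> *\<^sub>R d + \<eta> *\<^sub>R c + (\<alpha> * \<eta>) *\<^sub>R b)
    = W_rate (\<gamma> - \<alpha> * \<beta>) \<kappa> b d"
  using assms
  by (simp add: W_rate_def power2_norm_eq_inner inner_add_left inner_add_right inner_diff_left
      inner_diff_right inner_commute field_simps)

lemma F_rate_identity:
  fixes b c d v w th :: "'h::real_inner"
  shows "\<eta> * (inner th w + - inner b (\<kappa> *\<^sub>R d + \<eta> *\<^sub>R c + (\<alpha> * \<eta>) *\<^sub>R b))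
      + \<eta>\<^sup>2 / 2 * (2 * inner b c) + 1 / 2 * (2 * - inner th (\<kappa> *\<^sub>R th + \<eta> *\<^sub>R w + (\<alpha> * \<eta>) *\<^sub>R v))
    = F_rate \<alpha> \<kappa> \<eta> b d v th"
  by (simp add: F_rate_def power2_norm_eq_inner inner_add_left inner_add_right inner_commute
      algebra_simps power2_eq_square[of \<eta>])

lemma G_rate_identity:
  fixes a b d v w :: "'h::real_inner"
  assumes "\<alpha> \<noteq> 0"
  shows "- (- inner (b - \<alpha> *\<^sub>R a) (\<beta> *\<^sub>R b + \<gamma> *\<^sub>R a - \<eta> *\<^sub>R d) + inner (w - \<alpha> *\<^sub>R v) (w + \<alpha> *\<^sub>R v))
    = G_rate \<alpha> \<gamma> \<eta> (\<gamma> - \<alpha> * \<beta>) (b + \<alpha> *\<^sub>R a) (w + \<alpha> *\<^sub>R v) b d v"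
  using assms
  by (simp add: G_rate_def power2_norm_eq_inner inner_add_left inner_add_right inner_diff_left
      inner_diff_right inner_commute field_simps)

section \<open>The square root S and derivatives along solutions\<close>

locale coercive_square_root =
  fixes DA DS :: "'h::real_inner set" and A S :: "'h \<Rightarrow> 'h" and l1 :: real
  assumes A_sa: "selfadjoint_op DA A" and A_pos: "strictly_positive_op DA A"
    and l1_min: "\<forall>l\<in>op_spectrum DA A. l1 \<le> l" and l1_pos: "0 < l1"
    and S_sa: "selfadjoint_op DS S" and S_dom: "DA = {x \<in> DS. S x \<in> DS}"
    and S_sq: "\<forall>x\<in>DA. A x = S (S x)"
begin

lemma A_coercive: "x \<in> DA \<Longrightarrow> l1 * (norm x)\<^sup>2 \<le> inner (A x) x"
  using A_sa A_pos l1_min unfolding selfadjoint_op_def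
  by (blast intro: quadratic_form_ge_spectral_bound strictly_positive_imp_positive_op)

lemma A_surj: "\<exists>z\<in>DA. A z = y"
proof -
  have "0 \<notin> op_spectrum DA A" using l1_min l1_pos by force
  then have "bij_betw A DA UNIV" by (simp add: op_spectrum_def)
  then have "y \<in> A ` DA" by (simp add: bij_betw_def)
  then show ?thesis by blast
qed

lemma S_linear_op: "linear_op DS S"
  using S_sa unfolding selfadjoint_op_def by blast

lemma S_symmetric: "x \<in> DS \<Longrightarrow> y \<in> DS \<Longrightarrow> inner (S x) y = inner x (S y)"
  using S_sa unfolding selfadjoint_op_def by blast

lemma DS_closed [simp]:
  "x \<in> DS \<Longrightarrow> y \<in> DS \<Longrightarrow> x + y \<in> DS"
  "x \<in> DS \<Longrightarrow> y \<in> DS \<Longrightarrow> x - y \<in> DS"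
  "x \<in> DS \<Longrightarrow> c *\<^sub>R x \<in> DS"
  using S_linear_op unfolding linear_op_def by (simp_all add: subspace_add subspace_diff subspace_scale)

lemma S_linear [simp]:
  "x \<in> DS \<Longrightarrow> y \<in> DS \<Longrightarrow> S (x + y) = S x + S y"
  "x \<in> DS \<Longrightarrow> y \<in> DS \<Longrightarrow> S (x - y) = S x - S y"
  "x \<in> DS \<Longrightarrow> S (c *\<^sub>R x) = c *\<^sub>R S x"
  using S_linear_op linear_op_diff[OF S_linear_op] unfolding linear_op_def by simp_all

lemma inner_A: "x \<in> DS \<Longrightarrow> z \<in> DA \<Longrightarrow> inner x (A z) = inner (S x) (S z)"
  using S_dom S_sq S_symmetric[of x "S z"] by (simp add: inner_commute)

lemma A_norm_lower: "y \<in> DA \<Longrightarrow> l1 * norm y \<le> norm (A y)"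
proof (cases "y = 0")
  case False
  assume "y \<in> DA"
  have "l1 * (norm y)\<^sup>2 \<le> inner (A y) y" using A_coercive[OF \<open>y \<in> DA\<close>] .
  also have "\<dots> \<le> norm (A y) * norm y" by (rule norm_cauchy_schwarz)
  finally show ?thesis using False by (simp add: power2_eq_square)
qed simp

text \<open>Write x = A y = S (S y); then |S y|^2 = \<langle>y, x\<rangle> and |x|^2 = \<langle>S y, S x\<rangle>.\<close>
lemma S_poincare:
  assumes "x \<in> DS"
  shows "l1 * (norm x)\<^sup>2 \<le> (norm (S x))\<^sup>2"
proof -
  obtain y where "y \<in> DA" "A y = x" using A_surj by blast
  then have "y \<in> DS" "S y \<in> DS" "S (S y) = x" using S_dom S_sq by auto
  have "l1 * (norm (S y))\<^sup>2 = l1 * inner y x"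
    using S_symmetric[OF \<open>y \<in> DS\<close> \<open>S y \<in> DS\<close>] \<open>S (S y) = x\<close>
    by (simp add: power2_norm_eq_inner inner_commute)
  also have "\<dots> \<le> (l1 * norm y) * norm x"
    using mult_left_mono[OF norm_cauchy_schwarz[of y x], of l1] l1_pos by (simp add: mult.assoc)
  also have "\<dots> \<le> norm x * norm x"
    using A_norm_lower[OF \<open>y \<in> DA\<close>] \<open>A y = x\<close> by (simp add: mult_right_mono)
  finally have Sy: "l1 * (norm (S y))\<^sup>2 \<le> (norm x)\<^sup>2" by (simp add: power2_eq_square)
  have "(norm x)\<^sup>2 = inner (S y) (S x)"
    using S_symmetric[OF \<open>S y \<in> DS\<close> assms] \<open>S (S y) = x\<close> by (simp add: power2_norm_eq_inner)
  then have "(norm x)\<^sup>2 \<le> norm (S y) * norm (S x)" using norm_cauchy_schwarz by simp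
  then have "((norm x)\<^sup>2)\<^sup>2 \<le> (norm (S y) * norm (S x))\<^sup>2" by (rule power_mono) simp
  then have "l1 * ((norm x)\<^sup>2 * (norm x)\<^sup>2) \<le> (l1 * (norm (S y))\<^sup>2) * (norm (S x))\<^sup>2"
    using l1_pos by (simp add: power_mult_distrib power2_eq_square[of "(norm x)\<^sup>2"] mult.assoc)
  also have "\<dots> \<le> (norm x)\<^sup>2 * (norm (S x))\<^sup>2"
    using Sy by (rule mult_right_mono) simp
  finally have "(norm x)\<^sup>2 * (l1 * (norm x)\<^sup>2) \<le> (norm x)\<^sup>2 * (norm (S x))\<^sup>2"
    by (simp add: mult_ac)
  then show ?thesis by (cases "x = 0") simp_all
qed

lemma S_inj: "x \<in> DS \<Longrightarrow> y \<in> DS \<Longrightarrow> S x = S y \<Longrightarrow> x = y"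
  using S_poincare[of "x - y"] l1_pos by (simp add: mult_le_0_iff)

lemma op_inv_S: "x \<in> DS \<Longrightarrow> op_inv DS S (S x) = x"
  unfolding op_inv_def by (rule the_equality) (auto intro: S_inj)

lemma S_op_inv: "op_inv DS S y \<in> DS" "S (op_inv DS S y) = y"
proof -
  obtain z where "z \<in> DA" "A z = y" using A_surj by blast
  then have "S z \<in> DS" "S (S z) = y" using S_dom S_sq by auto
  then show "op_inv DS S y \<in> DS" "S (op_inv DS S y) = y"
    using op_inv_S[of "S z"] by simp_all
qed

lemma op_inv_A: "z \<in> DA \<Longrightarrow> op_inv DS S (A z) = S z"
  using S_dom S_sq op_inv_S by simp

lemma bounded_linear_op_inv: "bounded_linear (op_inv DS S)"
proof (rule bounded_linear_intro[where K = "1 / sqrt l1"])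
  fix x y :: 'h and r :: real
  show "op_inv DS S (x + y) = op_inv DS S x + op_inv DS S y"
    using op_inv_S[of "op_inv DS S x + op_inv DS S y"] S_op_inv by simp
  show "op_inv DS S (r *\<^sub>R x) = r *\<^sub>R op_inv DS S x"
    using op_inv_S[of "r *\<^sub>R op_inv DS S x"] S_op_inv by simp
  have "(norm (op_inv DS S x))\<^sup>2 \<le> (norm x)\<^sup>2 / l1"
    using S_poincare[OF S_op_inv(1)] l1_pos by (simp add: S_op_inv(2) field_simps)
  also have "\<dots> = (norm x * (1 / sqrt l1))\<^sup>2"
    using l1_pos by (simp add: power_mult_distrib power_divide)
  finally show "norm (op_inv DS S x) \<le> norm x * (1 / sqrt l1)"
    by (rule power2_le_imp_le) (use l1_pos in simp)
qed

text \<open>\<theta>(t) \<in> D(S) is not among the conditions of a regular solution; it follows from the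
  second equation, whose A-argument lies in D(A) \<subseteq> D(S), provided \<kappa> \<noteq> 0.\<close>
lemma regular_solution_in_DS:
  assumes "regular_solution DA A DS S \<alpha> \<beta> \<gamma> \<kappa> \<eta> u v w th" "0 \<le> t" "\<kappa> \<noteq> 0"
  shows "u t \<in> DS" "v t \<in> DS" "w t \<in> DS" "th t \<in> DS"
proof -
  note sol = regular_solutionD[OF assms(1,2)]
  show "u t \<in> DS" "v t \<in> DS" "w t \<in> DS" using sol by simp_all
  have "\<kappa> *\<^sub>R th t + \<eta> *\<^sub>R w t + (\<alpha> * \<eta>) *\<^sub>R v t \<in> DS" using sol(5) S_dom by blast
  moreover have "\<eta> *\<^sub>R w t + (\<alpha> * \<eta>) *\<^sub>R v t \<in> DS" using sol by simp
  ultimately have "(\<kappa> *\<^sub>R th t + \<eta> *\<^sub>R w t + (\<alpha> * \<eta>) *\<^sub>R v t) - (\<eta> *\<^sub>R w t + (\<alpha> * \<eta>) *\<^sub>R v t) \<in> DS"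
    by (rule DS_closed(2))
  then have "\<kappa> *\<^sub>R th t \<in> DS" by simp
  then have "(1 / \<kappa>) *\<^sub>R (\<kappa> *\<^sub>R th t) \<in> DS" by (rule DS_closed(3))
  then show "th t \<in> DS" using \<open>\<kappa> \<noteq> 0\<close> by simp
qed

lemma Wfun_has_derivative:
  assumes sol: "regular_solution DA A DS S \<alpha> \<beta> \<gamma> \<kappa> \<eta> u v w th" and "0 \<le> t" "\<alpha> \<noteq> 0" "\<kappa> \<noteq> 0"
  shows "((\<lambda>s. Wfun S \<alpha> \<beta> \<gamma> (u s) (v s) (w s) (th s)) has_real_derivative
      W_rate (\<gamma> - \<alpha> * \<beta>) \<kappa> (S (v t)) (S (th t))) (at t within {0..})"
proof -
  note D = regular_solutionD[OF sol \<open>0 \<le> t\<close>]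
  note DS = regular_solution_in_DS[OF sol \<open>0 \<le> t\<close> \<open>\<kappa> \<noteq> 0\<close>]
  define z1 where "z1 = \<beta> *\<^sub>R v t + \<gamma> *\<^sub>R u t - \<eta> *\<^sub>R th t"
  define z2 where "z2 = \<kappa> *\<^sub>R th t + \<eta> *\<^sub>R w t + (\<alpha> * \<eta>) *\<^sub>R v t"
  have "z1 \<in> DA" "z2 \<in> DA" using D by (simp_all add: z1_def z2_def)
  have dP: "((\<lambda>s. S (v s + \<alpha> *\<^sub>R u s)) has_vector_derivative S (w t) + \<alpha> *\<^sub>R S (v t)) (at t within {0..})"
  proof (rule has_vector_derivative_transform_within[OF _ zero_less_one])
    show "((\<lambda>s. S (v s) + \<alpha> *\<^sub>R S (u s)) has_vector_derivative S (w t) + \<alpha> *\<^sub>R S (v t)) (at t within {0..})"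
      by (intro has_vector_derivative_add D bounded_linear.has_vector_derivative[OF bounded_linear_scaleR_right])
    fix s :: real assume "s \<in> {0..}"
    then show "S (v s) + \<alpha> *\<^sub>R S (u s) = S (v s + \<alpha> *\<^sub>R u s)"
      using regular_solution_in_DS[OF sol _ \<open>\<kappa> \<noteq> 0\<close>] by simp
  qed (use \<open>0 \<le> t\<close> in simp)
  have dq: "((\<lambda>s. w s + \<alpha> *\<^sub>R v s) has_vector_derivative - A z1) (at t within {0..})"
    using has_vector_derivative_add[OF D(10) bounded_linear.has_vector_derivative[OF bounded_linear_scaleR_right[of \<alpha>] D(8)]]
    by (simp add: z1_def)
  have "S (v t + \<alpha> *\<^sub>R u t) = S (v t) + \<alpha> *\<^sub>R S (u t)" using DS by simp
  moreover have "inner (w t + \<alpha> *\<^sub>R v t) (- A z1)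
      = - inner (S (w t) + \<alpha> *\<^sub>R S (v t)) (\<beta> *\<^sub>R S (v t) + \<gamma> *\<^sub>R S (u t) - \<eta> *\<^sub>R S (th t))"
    using inner_A[of "w t + \<alpha> *\<^sub>R v t" z1] \<open>z1 \<in> DA\<close> DS by (simp add: z1_def)
  moreover have "inner (th t) (- A z2)
      = - inner (S (th t)) (\<kappa> *\<^sub>R S (th t) + \<eta> *\<^sub>R S (w t) + (\<alpha> * \<eta>) *\<^sub>R S (v t))"
    using inner_A[of "th t" z2] \<open>z2 \<in> DA\<close> DS by (simp add: z2_def)
  moreover have "((\<lambda>s. Wfun S \<alpha> \<beta> \<gamma> (u s) (v s) (w s) (th s)) has_real_derivative
      \<gamma> / \<alpha> * (2 * inner (S (v t + \<alpha> *\<^sub>R u t)) (S (w t) + \<alpha> *\<^sub>R S (v t)))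
      + 2 * inner (w t + \<alpha> *\<^sub>R v t) (- A z1)
      - (\<gamma> - \<alpha> * \<beta>) / \<alpha> * (2 * inner (S (v t)) (S (w t))) + 2 * inner (th t) (- A z2))
      (at t within {0..})"
    unfolding Wfun_def using D(11) unfolding z2_def[symmetric]
    by (intro DERIV_add DERIV_diff DERIV_cmult has_real_derivative_norm_power2 dP dq D)
  ultimately show ?thesis by (simp only: W_rate_identity[OF \<open>\<alpha> \<noteq> 0\<close>])
qed

lemma Ffun_has_derivative:
  assumes sol: "regular_solution DA A DS S \<alpha> \<beta> \<gamma> \<kappa> \<eta> u v w th" and "0 \<le> t" "\<kappa> \<noteq> 0"
  shows "((\<lambda>s. Ffun DS S \<eta> (v s) (th s)) has_real_derivative
      F_rate \<alpha> \<kappa> \<eta> (S (v t)) (S (th t)) (v t) (th t)) (at t within {0..})"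
proof -
  note D = regular_solutionD[OF sol \<open>0 \<le> t\<close>]
  note DS = regular_solution_in_DS[OF sol \<open>0 \<le> t\<close> \<open>\<kappa> \<noteq> 0\<close>]
  define z2 where "z2 = \<kappa> *\<^sub>R th t + \<eta> *\<^sub>R w t + (\<alpha> * \<eta>) *\<^sub>R v t"
  have "z2 \<in> DA" using D by (simp add: z2_def)
  then have "z2 \<in> DS" using S_dom by auto
  have dth: "(th has_vector_derivative - A z2) (at t within {0..})" using D(11) by (simp add: z2_def)
  have "inner (- A z2) (v t)
      = - inner (S (v t)) (\<kappa> *\<^sub>R S (th t) + \<eta> *\<^sub>R S (w t) + (\<alpha> * \<eta>) *\<^sub>R S (v t))"
    using inner_A[of "v t" z2] \<open>z2 \<in> DA\<close> DS by (simp add: z2_def inner_commute)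
  moreover have "inner (op_inv DS S (th t)) (op_inv DS S (- A z2))
      = - inner (th t) (\<kappa> *\<^sub>R th t + \<eta> *\<^sub>R w t + (\<alpha> * \<eta>) *\<^sub>R v t)"
  proof -
    have "op_inv DS S (- A z2) = - S z2"
      using linear_neg[OF bounded_linear.linear[OF bounded_linear_op_inv]] op_inv_A[OF \<open>z2 \<in> DA\<close>] by simp
    then show ?thesis
      using S_symmetric[OF S_op_inv(1) \<open>z2 \<in> DS\<close>] by (simp add: S_op_inv(2) z2_def)
  qed
  moreover have "((\<lambda>s. Ffun DS S \<eta> (v s) (th s)) has_real_derivative
      \<eta> * (inner (th t) (w t) + inner (- A z2) (v t)) + \<eta>\<^sup>2 / 2 * (2 * inner (S (v t)) (S (w t)))
      + 1 / 2 * (2 * inner (op_inv DS S (th t)) (op_inv DS S (- A z2)))) (at t within {0..})"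
    unfolding Ffun_def
    by (intro DERIV_add DERIV_cmult has_real_derivative_inner has_real_derivative_norm_power2 dth D
        bounded_linear.has_vector_derivative[OF bounded_linear_op_inv])
  ultimately show ?thesis by (simp only: F_rate_identity)
qed

lemma Gfun_has_derivative:
  assumes sol: "regular_solution DA A DS S \<alpha> \<beta> \<gamma> \<kappa> \<eta> u v w th" and "0 \<le> t" "\<alpha> \<noteq> 0" "\<kappa> \<noteq> 0"
  shows "((\<lambda>s. Gfun \<alpha> (u s) (v s) (w s)) has_real_derivative
      G_rate \<alpha> \<gamma> \<eta> (\<gamma> - \<alpha> * \<beta>) (S (v t + \<alpha> *\<^sub>R u t)) (w t + \<alpha> *\<^sub>R v t) (S (v t)) (S (th t)) (v t))
      (at t within {0..})"
proof -
  note D = regular_solutionD[OF sol \<open>0 \<le> t\<close>]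
  note DS = regular_solution_in_DS[OF sol \<open>0 \<le> t\<close> \<open>\<kappa> \<noteq> 0\<close>]
  define z1 where "z1 = \<beta> *\<^sub>R v t + \<gamma> *\<^sub>R u t - \<eta> *\<^sub>R th t"
  have "z1 \<in> DA" using D by (simp add: z1_def)
  have dp: "((\<lambda>s. v s - \<alpha> *\<^sub>R u s) has_vector_derivative w t - \<alpha> *\<^sub>R v t) (at t within {0..})"
    by (intro has_vector_derivative_diff D bounded_linear.has_vector_derivative[OF bounded_linear_scaleR_right])
  have dq: "((\<lambda>s. w s + \<alpha> *\<^sub>R v s) has_vector_derivative - A z1) (at t within {0..})"
    using has_vector_derivative_add[OF D(10) bounded_linear.has_vector_derivative[OF bounded_linear_scaleR_right[of \<alpha>] D(8)]]
    by (simp add: z1_def)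
  have "S (v t + \<alpha> *\<^sub>R u t) = S (v t) + \<alpha> *\<^sub>R S (u t)" using DS by simp
  moreover have "inner (v t - \<alpha> *\<^sub>R u t) (- A z1)
      = - inner (S (v t) - \<alpha> *\<^sub>R S (u t)) (\<beta> *\<^sub>R S (v t) + \<gamma> *\<^sub>R S (u t) - \<eta> *\<^sub>R S (th t))"
    using inner_A[of "v t - \<alpha> *\<^sub>R u t" z1] \<open>z1 \<in> DA\<close> DS by (simp add: z1_def)
  moreover have "((\<lambda>s. Gfun \<alpha> (u s) (v s) (w s)) has_real_derivative
      - (inner (v t - \<alpha> *\<^sub>R u t) (- A z1) + inner (w t - \<alpha> *\<^sub>R v t) (w t + \<alpha> *\<^sub>R v t)))
      (at t within {0..})"
    unfolding Gfun_def by (intro DERIV_minus has_real_derivative_inner dp dq)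
  ultimately show ?thesis by (simp only: G_rate_identity[OF \<open>\<alpha> \<noteq> 0\<close>])
qed

lemma Lfun_has_derivative:
  assumes "regular_solution DA A DS S \<alpha> \<beta> \<gamma> \<kappa> \<eta> u v w th" "0 \<le> t" "\<alpha> \<noteq> 0" "\<kappa> \<noteq> 0"
  shows "((\<lambda>s. Lfun DS S \<alpha> \<beta> \<gamma> \<eta> \<rho> \<epsilon> (u s) (v s) (w s) (th s)) has_real_derivative
      L_rate \<alpha> \<gamma> \<kappa> \<eta> (\<gamma> - \<alpha> * \<beta>) \<rho> \<epsilon> (S (v t + \<alpha> *\<^sub>R u t)) (w t + \<alpha> *\<^sub>R v t)
        (S (v t)) (S (th t)) (v t) (th t)) (at t within {0..})"
  unfolding Lfun_def L_rate_def
  using assms by (intro DERIV_add DERIV_cmult Wfun_has_derivative Ffun_has_derivative Gfun_has_derivative)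

lemma Lfun_dissipation:
  assumes "\<alpha> \<noteq> 0" "\<kappa> \<noteq> 0"
    and "\<exists>\<omega>>0. \<forall>(P::'h) q V T v th. l1 * (norm v)\<^sup>2 \<le> (norm V)\<^sup>2 \<longrightarrow> l1 * (norm th)\<^sup>2 \<le> (norm T)\<^sup>2 \<longrightarrow>
      L_rate \<alpha> \<gamma> \<kappa> \<eta> (\<gamma> - \<alpha> * \<beta>) \<rho> \<epsilon> P q V T v th + \<omega> * E_state P q V th \<le> 0"
  shows "\<exists>\<omega>>0. \<forall>u v w th. regular_solution DA A DS S \<alpha> \<beta> \<gamma> \<kappa> \<eta> u v w th \<longrightarrow>
      (\<forall>t\<ge>0. \<exists>L'. ((\<lambda>s. Lfun DS S \<alpha> \<beta> \<gamma> \<eta> \<rho> \<epsilon> (u s) (v s) (w s) (th s)) has_real_derivative L')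
          (at t within {0..}) \<and> L' + \<omega> * Efun S \<alpha> (u t) (v t) (w t) (th t) \<le> 0)"
proof -
  obtain \<omega> where "0 < \<omega>" and rate: "\<forall>(P::'h) q V T v th.
      l1 * (norm v)\<^sup>2 \<le> (norm V)\<^sup>2 \<longrightarrow> l1 * (norm th)\<^sup>2 \<le> (norm T)\<^sup>2 \<longrightarrow>
      L_rate \<alpha> \<gamma> \<kappa> \<eta> (\<gamma> - \<alpha> * \<beta>) \<rho> \<epsilon> P q V T v th + \<omega> * E_state P q V th \<le> 0"
    using assms(3) by (elim exE conjE)
  have "\<exists>L'. ((\<lambda>s. Lfun DS S \<alpha> \<beta> \<gamma> \<eta> \<rho> \<epsilon> (u s) (v s) (w s) (th s)) has_real_derivative L')
      (at t within {0..}) \<and> L' + \<omega> * Efun S \<alpha> (u t) (v t) (w t) (th t) \<le> 0"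
    if sol: "regular_solution DA A DS S \<alpha> \<beta> \<gamma> \<kappa> \<eta> u v w th" and "0 \<le> t" for u v w th t
  proof -
    have "v t \<in> DS" "th t \<in> DS" using regular_solution_in_DS[OF sol \<open>0 \<le> t\<close> \<open>\<kappa> \<noteq> 0\<close>] by simp_all
    then show ?thesis
      using Lfun_has_derivative[OF sol \<open>0 \<le> t\<close> assms(1,2), of \<rho> \<epsilon>]
        rate[rule_format, where P = "S (v t + \<alpha> *\<^sub>R u t)" and q = "w t + \<alpha> *\<^sub>R v t", OF S_poincare S_poincare]
      unfolding Efun_def E_state_def by blast
  qed
  then show ?thesis using \<open>0 < \<omega>\<close> by blast
qed

end

section \<open>Choice of the parameters\<close>

definition gap_factor :: "real \<Rightarrow> real" where
  "gap_factor s = (if 1 < s then 1 - s + s\<^sup>2 else 1)"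

lemma gap_factor_pos: "0 < gap_factor s"
proof -
  have "0 < (s - 1/2)\<^sup>2 + 3/4" by (simp add: add_nonneg_pos)
  then show ?thesis by (simp add: gap_factor_def power2_eq_square algebra_simps)
qed

lemma tfun_eq_gap_factor:
  assumes "0 < \<alpha>" "0 < \<kappa>" "0 < l1"
  shows "tfun \<alpha> l1 \<kappa> = 2 * \<kappa> / \<alpha>\<^sup>2 * gap_factor (\<alpha> / (\<kappa> * l1))"
proof -
  have "(\<kappa> < \<alpha> / l1) = (1 < \<alpha> / (\<kappa> * l1))"
    using assms by (simp add: field_simps)
  then show ?thesis
    using assms by (simp add: tfun_def gap_factor_def field_simps power2_eq_square)
qed

lemma gap_factor_small_ratio:
  fixes s :: real
  assumes "0 < s" "s \<le> 5/2"
  shows "1 \<le> 15/8 * (1 - s/4)\<^sup>2 * gap_factor s"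
proof (cases "1 < s")
  case True
  define r where "r = s - 1"
  have r: "0 < r" "r \<le> 3/2" using True assms by (auto simp: r_def)
  have "15 * r\<^sup>2 * ((r - 1) * (4 - r)) \<le> 7 + 45 * r"
  proof (cases "r \<le> 1")
    case True
    then have "(r - 1) * (4 - r) \<le> 0" using r by (intro mult_nonpos_nonneg) auto
    then have "15 * r\<^sup>2 * ((r - 1) * (4 - r)) \<le> 0" by (simp add: mult_nonneg_nonpos)
    then show ?thesis using r by linarith
  next
    case False
    have "r\<^sup>2 \<le> 9/4" using power_mono[of r "3/2" 2] r by (simp add: power2_eq_square)
    moreover have "(r - 1) * (4 - r) \<le> 1/2 * 3" using False r by (intro mult_mono) auto
    ultimately have "r\<^sup>2 * ((r - 1) * (4 - r)) \<le> 9/4 * (1/2 * 3)"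
      using False r by (intro mult_mono) auto
    then show ?thesis using False by linarith
  qed
  moreover have "15/8 * (1 - s/4)\<^sup>2 * (1 - s + s\<^sup>2) = 1 + (7 + 45 * r - 15 * r\<^sup>2 * ((r - 1) * (4 - r))) / 128"
    unfolding r_def by algebra
  ultimately show ?thesis using True by (simp add: gap_factor_def)
next
  case False
  then have "(3/4)\<^sup>2 \<le> (1 - s/4)\<^sup>2" by (intro power_mono) auto
  then show ?thesis using False by (simp add: gap_factor_def power2_eq_square)
qed

lemma gap_factor_large_ratio:
  fixes s :: real
  assumes "5/2 \<le> s"
  shows "s\<^sup>2 * (s - 1)\<^sup>2 * (7/5 * s + 3/5)
    \<le> gap_factor s * (2 * s * (s - 1) * (7/5 * s + 3/5) - 2 * (7/5 * s + 3/5) - s\<^sup>2 * (s - 1))"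
proof -
  define r where "r = s - 5/2"
  have "0 \<le> r" using assms by (simp add: r_def)
  have "gap_factor s * (2 * s * (s - 1) * (7/5 * s + 3/5) - 2 * (7/5 * s + 3/5) - s\<^sup>2 * (s - 1))
      - s\<^sup>2 * (s - 1)\<^sup>2 * (7/5 * s + 3/5)
    = 197/40 + 1483/40 * r + 431/10 * r\<^sup>2 + 106/5 * r^3 + 24/5 * r^4 + 2/5 * r^5"
    using assms unfolding gap_factor_def r_def by simp algebra
  also have "\<dots> \<ge> 0" using \<open>0 \<le> r\<close> by simp
  finally show ?thesis by simp
qed

text \<open>After the scaling \<rho> = l1 r, \<alpha> = s \<kappa> l1 used in exists_damping, admissibility of
  (\<rho>, x, y) depends on s alone; the witnesses are explicit choices on either side of s = 5/2.\<close>
lemma exists_scaled_damping: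
  fixes s :: real
  assumes "0 < s"
  obtains r x y where "0 < r" "0 < x" "0 \<le> y" "x + y < 2"
    "s\<^sup>2 \<le> gap_factor s * (r * s - r\<^sup>2 / (4 * x) - r\<^sup>2 * s\<^sup>2 / (4 * (r + y)))"
proof (cases "s \<le> 5/2")
  case True
  define r where "r = 15/4 * (1 - s/4) * s"
  have "0 < r" using True assms by (simp add: r_def)
  have "r\<^sup>2 * s\<^sup>2 / (4 * (r + 0)) = r * s\<^sup>2 / 4"
    using \<open>0 < r\<close> by (simp add: power2_eq_square)
  moreover have "r * s - r\<^sup>2 / (4 * (15/8)) - r * s\<^sup>2 / 4 = 15/8 * (1 - s/4)\<^sup>2 * s\<^sup>2"
    by (simp add: r_def field_simps power2_eq_square)
  ultimately have margin: "r * s - r\<^sup>2 / (4 * (15/8)) - r\<^sup>2 * s\<^sup>2 / (4 * (r + 0))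
      = 15/8 * (1 - s/4)\<^sup>2 * s\<^sup>2"
    by simp
  have "s\<^sup>2 \<le> gap_factor s * (15/8 * (1 - s/4)\<^sup>2 * s\<^sup>2)"
    using mult_right_mono[OF gap_factor_small_ratio[OF assms True], of "s\<^sup>2"] by (simp add: mult_ac)
  then show ?thesis
    using that[of r "15/8" 0] \<open>0 < r\<close> unfolding margin by simp
next
  case False
  define c where "c = s - 1"
  define B where "B = 7/5 * s + 3/5"
  have "0 < c" "0 < B" using False by (auto simp: c_def B_def)
  have B_over_c: "2/c + 7/5 = B/c"
    using \<open>0 < c\<close> by (simp add: B_def c_def field_simps)
  have margin: "2/c * s - (2/c)\<^sup>2 / (4 * (1/2)) - (2/c)\<^sup>2 * s\<^sup>2 / (4 * (2/c + 7/5))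
      = (2 * s * c * B - 2 * B - s\<^sup>2 * c) / (c\<^sup>2 * B)"
    unfolding B_over_c using \<open>0 < c\<close> \<open>0 < B\<close> by (simp add: field_simps power2_eq_square)
  have "s\<^sup>2 * (c\<^sup>2 * B) \<le> gap_factor s * (2 * s * c * B - 2 * B - s\<^sup>2 * c)"
    using gap_factor_large_ratio[of s] False by (simp add: c_def B_def mult_ac)
  then have "s\<^sup>2 \<le> gap_factor s * ((2 * s * c * B - 2 * B - s\<^sup>2 * c) / (c\<^sup>2 * B))"
    using \<open>0 < c\<close> \<open>0 < B\<close> by (simp add: field_simps)
  then show ?thesis
    using that[of "2/c" "1/2" "7/5"] \<open>0 < c\<close> margin by (simp add: mult_ac)
qed

lemma exists_damping:
  fixes \<alpha> \<kappa> l1 \<mu> \<eta> :: real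
  assumes "0 < \<alpha>" "0 < \<kappa>" "0 < l1" "0 \<le> \<mu>" "tfun \<alpha> l1 \<kappa> * \<mu> < \<eta>\<^sup>2"
  obtains \<rho> x y where "0 < \<rho>" "0 < x" "0 \<le> y" "x + y < 2"
    "2 * \<mu> < \<rho> * \<alpha> * \<eta>\<^sup>2 - \<rho>\<^sup>2 * \<eta>\<^sup>2 * \<kappa> / (4 * x)
       - \<rho>\<^sup>2 * \<alpha>\<^sup>2 * \<eta>\<^sup>2 / (4 * (\<rho> * \<kappa> + y * \<kappa> * l1) * l1)"
proof -
  define s where "s = \<alpha> / (\<kappa> * l1)"
  define K where "K = \<kappa> * l1\<^sup>2 * \<eta>\<^sup>2"
  have "0 < s" using assms by (simp add: s_def)
  have \<alpha>_eq: "\<alpha> = s * \<kappa> * l1" using assms by (simp add: s_def)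
  obtain r x y where r: "0 < r" "0 < x" "0 \<le> y" "x + y < 2"
    and scaled: "s\<^sup>2 \<le> gap_factor s * (r * s - r\<^sup>2 / (4 * x) - r\<^sup>2 * s\<^sup>2 / (4 * (r + y)))"
    using exists_scaled_damping[OF \<open>0 < s\<close>] by blast
  define \<phi> where "\<phi> = r * s - r\<^sup>2 / (4 * x) - r\<^sup>2 * s\<^sup>2 / (4 * (r + y))"
  have "2 * gap_factor s * \<mu> = 2 * \<kappa> / \<alpha>\<^sup>2 * gap_factor s * \<mu> * (\<alpha>\<^sup>2 / \<kappa>)"
    using assms by (simp add: field_simps)
  also have "\<dots> < \<eta>\<^sup>2 * (\<alpha>\<^sup>2 / \<kappa>)"
    using assms tfun_eq_gap_factor[of \<alpha> \<kappa> l1] by (intro mult_strict_right_mono) (simp_all add: s_def)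
  also have "\<dots> = K * s\<^sup>2"
    using assms by (simp add: K_def \<alpha>_eq field_simps power2_eq_square)
  also have "\<dots> \<le> K * (gap_factor s * \<phi>)"
    using scaled assms by (intro mult_left_mono) (simp_all add: K_def \<phi>_def)
  finally have "2 * \<mu> < K * \<phi>"
    using gap_factor_pos[of s] by (simp add: mult.left_commute)
  moreover have "K * \<phi> = l1 * r * \<alpha> * \<eta>\<^sup>2 - (l1 * r)\<^sup>2 * \<eta>\<^sup>2 * \<kappa> / (4 * x)
      - (l1 * r)\<^sup>2 * \<alpha>\<^sup>2 * \<eta>\<^sup>2 / (4 * (l1 * r * \<kappa> + y * \<kappa> * l1) * l1)"
  proof -
    define D where "D = r + y"
    have "0 < D" using r by (simp add: D_def)
    have "l1 * r * \<kappa> + y * \<kappa> * l1 = \<kappa> * l1 * D" by (simp add: D_def algebra_simps)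
    then show ?thesis
      using assms r \<open>0 < D\<close> by (simp add: K_def \<phi>_def D_def[symmetric] \<alpha>_eq field_simps power2_eq_square)
  qed
  ultimately show ?thesis
    using that[of "l1 * r" x y] assms r by simp
qed

section \<open>Dissipation estimates\<close>

lemma inner_le_weighted_squares:
  fixes x y :: "'a::real_inner"
  assumes "0 \<le> a" "0 \<le> b" "c\<^sup>2 \<le> 4 * a * b"
  shows "c * inner x y \<le> a * (norm x)\<^sup>2 + b * (norm y)\<^sup>2"
proof -
  define X Y where "X = norm x" and "Y = norm y"
  have "0 \<le> X" "0 \<le> Y" by (simp_all add: X_def Y_def)
  have "(\<bar>c\<bar> * (X * Y))\<^sup>2 = c\<^sup>2 * (X * Y)\<^sup>2" by (simp add: power_mult_distrib)
  also have "\<dots> \<le> 4 * a * b * (X * Y)\<^sup>2" using assms(3) by (rule mult_right_mono) simp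
  also have "\<dots> \<le> 4 * a * b * (X * Y)\<^sup>2 + (a * X\<^sup>2 - b * Y\<^sup>2)\<^sup>2" by simp
  also have "\<dots> = (a * X\<^sup>2 + b * Y\<^sup>2)\<^sup>2" by algebra
  finally have "\<bar>c\<bar> * (X * Y) \<le> a * X\<^sup>2 + b * Y\<^sup>2"
    by (rule power2_le_imp_le) (use assms in simp)
  moreover have "c * inner x y \<le> \<bar>c\<bar> * (X * Y)"
  proof -
    have "c * inner x y \<le> \<bar>c * inner x y\<bar>" by (rule abs_ge_self)
    also have "\<dots> = \<bar>c\<bar> * \<bar>inner x y\<bar>" by (rule abs_mult)
    also have "\<dots> \<le> \<bar>c\<bar> * (X * Y)"
      unfolding X_def Y_def by (intro mult_left_mono Cauchy_Schwarz_ineq2) simp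
    finally show ?thesis .
  qed
  ultimately show ?thesis by (simp add: X_def Y_def)
qed

text \<open>Young's inequality absorbs the cross term in \<langle>T, V\<rangle> into x \<kappa> |T|^2 and the one in
  \<langle>\<theta>, u_t\<rangle> into (\<rho> \<kappa> + y \<kappa> l1) |\<theta>|^2, the surplus y \<kappa> l1 |\<theta>|^2 being paid by
  y \<kappa> |T|^2 via Poincare.\<close>
lemma WF_rate_le:
  fixes V T v th :: "'h::real_inner"
  assumes "0 < \<rho>" "0 < x" "0 \<le> y" "x + y \<le> 2" "0 < \<kappa>" "0 < l1"
    and v: "l1 * (norm v)\<^sup>2 \<le> (norm V)\<^sup>2" and th: "l1 * (norm th)\<^sup>2 \<le> (norm T)\<^sup>2"
  shows "W_rate \<mu> \<kappa> V T + \<rho> * F_rate \<alpha> \<kappa> \<eta> V T v th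
    \<le> - (\<rho> * \<alpha> * \<eta>\<^sup>2 - 2 * \<mu> - \<rho>\<^sup>2 * \<eta>\<^sup>2 * \<kappa> / (4 * x)
          - \<rho>\<^sup>2 * \<alpha>\<^sup>2 * \<eta>\<^sup>2 / (4 * (\<rho> * \<kappa> + y * \<kappa> * l1) * l1)) * (norm V)\<^sup>2
      - (2 - x - y) * \<kappa> / 2 * (norm T)\<^sup>2 - (2 - x - y) * \<kappa> / 2 * l1 * (norm th)\<^sup>2"
proof -
  define Y where "Y = \<rho> * \<kappa> + y * \<kappa> * l1"
  let ?c1 = "\<rho>\<^sup>2 * \<eta>\<^sup>2 * \<kappa> / (4 * x)"
  let ?c2 = "\<rho>\<^sup>2 * \<alpha>\<^sup>2 * \<eta>\<^sup>2 / (4 * Y * l1)"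
  let ?cT = "(2 - x - y) * \<kappa> / 2"
  have "0 < Y" using assms by (simp add: Y_def add_pos_nonneg)
  have young_VT: "(- \<rho> * \<eta> * \<kappa>) * inner V T \<le> ?c1 * (norm V)\<^sup>2 + x * \<kappa> * (norm T)\<^sup>2"
    using assms by (intro inner_le_weighted_squares) (simp_all add: power2_eq_square)
  have young_v_th: "(- \<rho> * \<alpha> * \<eta>) * inner v th
      \<le> \<rho>\<^sup>2 * \<alpha>\<^sup>2 * \<eta>\<^sup>2 / (4 * Y) * (norm v)\<^sup>2 + Y * (norm th)\<^sup>2"
    using \<open>0 < Y\<close> by (intro inner_le_weighted_squares) (simp_all add: power2_eq_square)
  have v_V: "\<rho>\<^sup>2 * \<alpha>\<^sup>2 * \<eta>\<^sup>2 / (4 * Y) * (norm v)\<^sup>2 \<le> ?c2 * (norm V)\<^sup>2"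
    using mult_left_mono[OF v, of ?c2] \<open>0 < Y\<close> assms by (simp add: field_simps)
  have th_T: "y * \<kappa> * l1 * (norm th)\<^sup>2 \<le> y * \<kappa> * (norm T)\<^sup>2"
    using mult_left_mono[OF th, of "y * \<kappa>"] assms by (simp add: mult.assoc)
  have th_T': "?cT * l1 * (norm th)\<^sup>2 \<le> ?cT * (norm T)\<^sup>2"
    using mult_left_mono[OF th, of ?cT] assms by (simp add: mult.assoc)
  have "W_rate \<mu> \<kappa> V T + \<rho> * F_rate \<alpha> \<kappa> \<eta> V T v th
      = 2 * \<mu> * (norm V)\<^sup>2 - 2 * \<kappa> * (norm T)\<^sup>2 + (- \<rho> * \<eta> * \<kappa>) * inner V T
        + (- \<rho> * \<alpha> * \<eta>) * inner v th - \<rho> * \<alpha> * \<eta>\<^sup>2 * (norm V)\<^sup>2 - \<rho> * \<kappa> * (norm th)\<^sup>2"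
    by (simp add: W_rate_def F_rate_def inner_commute algebra_simps)
  also have "\<dots> \<le> 2 * \<mu> * (norm V)\<^sup>2 - 2 * \<kappa> * (norm T)\<^sup>2
        + (?c1 * (norm V)\<^sup>2 + x * \<kappa> * (norm T)\<^sup>2) + (?c2 * (norm V)\<^sup>2 + Y * (norm th)\<^sup>2)
        - \<rho> * \<alpha> * \<eta>\<^sup>2 * (norm V)\<^sup>2 - \<rho> * \<kappa> * (norm th)\<^sup>2"
    using young_VT young_v_th v_V by linarith
  also have "\<dots> = - (\<rho> * \<alpha> * \<eta>\<^sup>2 - 2 * \<mu> - ?c1 - ?c2) * (norm V)\<^sup>2
      - (2 - x) * \<kappa> * (norm T)\<^sup>2 + y * \<kappa> * l1 * (norm th)\<^sup>2"
    by (simp add: Y_def algebra_simps)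
  also have "\<dots> \<le> - (\<rho> * \<alpha> * \<eta>\<^sup>2 - 2 * \<mu> - ?c1 - ?c2) * (norm V)\<^sup>2
      - ?cT * (norm T)\<^sup>2 - ?cT * l1 * (norm th)\<^sup>2"
  proof -
    have "(2 - x) * \<kappa> * (norm T)\<^sup>2 = ?cT * (norm T)\<^sup>2 + ?cT * (norm T)\<^sup>2 + y * \<kappa> * (norm T)\<^sup>2"
      by (simp add: algebra_simps)
    then show ?thesis using th_T th_T' by linarith
  qed
  finally show ?thesis by (simp only: Y_def)
qed

lemma WF_rate_coercive:
  assumes "0 < \<alpha>" "0 < \<kappa>" "0 < l1" "0 \<le> \<mu>" "tfun \<alpha> l1 \<kappa> * \<mu> < \<eta>\<^sup>2"
  obtains \<rho> c where "0 < \<rho>" "0 < c"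
    "\<And>V T v th :: 'h::real_inner. l1 * (norm v)\<^sup>2 \<le> (norm V)\<^sup>2 \<Longrightarrow> l1 * (norm th)\<^sup>2 \<le> (norm T)\<^sup>2 \<Longrightarrow>
       W_rate \<mu> \<kappa> V T + \<rho> * F_rate \<alpha> \<kappa> \<eta> V T v th \<le> - c * ((norm V)\<^sup>2 + (norm T)\<^sup>2 + (norm th)\<^sup>2)"
proof -
  obtain \<rho> x y where \<rho>: "0 < \<rho>" "0 < x" "0 \<le> y" "x + y < 2"
    and margin: "2 * \<mu> < \<rho> * \<alpha> * \<eta>\<^sup>2 - \<rho>\<^sup>2 * \<eta>\<^sup>2 * \<kappa> / (4 * x)
       - \<rho>\<^sup>2 * \<alpha>\<^sup>2 * \<eta>\<^sup>2 / (4 * (\<rho> * \<kappa> + y * \<kappa> * l1) * l1)"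
    using exists_damping[OF assms] by blast
  define cV where "cV = \<rho> * \<alpha> * \<eta>\<^sup>2 - 2 * \<mu> - \<rho>\<^sup>2 * \<eta>\<^sup>2 * \<kappa> / (4 * x)
       - \<rho>\<^sup>2 * \<alpha>\<^sup>2 * \<eta>\<^sup>2 / (4 * (\<rho> * \<kappa> + y * \<kappa> * l1) * l1)"
  define cT where "cT = (2 - x - y) * \<kappa> / 2"
  define c where "c = min cV (min cT (cT * l1))"
  have "0 < c" using margin \<rho> assms by (simp add: c_def cV_def cT_def)
  show ?thesis
  proof (rule that[OF \<open>0 < \<rho>\<close> \<open>0 < c\<close>])
    fix V T v th :: 'h
    assume "l1 * (norm v)\<^sup>2 \<le> (norm V)\<^sup>2" "l1 * (norm th)\<^sup>2 \<le> (norm T)\<^sup>2"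
    then have "W_rate \<mu> \<kappa> V T + \<rho> * F_rate \<alpha> \<kappa> \<eta> V T v th
        \<le> - cV * (norm V)\<^sup>2 - cT * (norm T)\<^sup>2 - cT * l1 * (norm th)\<^sup>2"
      unfolding cV_def cT_def using \<rho> assms by (intro WF_rate_le) simp_all
    moreover have "c * (norm V)\<^sup>2 \<le> cV * (norm V)\<^sup>2" "c * (norm T)\<^sup>2 \<le> cT * (norm T)\<^sup>2"
      "c * (norm th)\<^sup>2 \<le> cT * l1 * (norm th)\<^sup>2"
      by (intro mult_right_mono; simp add: c_def)+
    ultimately show "W_rate \<mu> \<kappa> V T + \<rho> * F_rate \<alpha> \<kappa> \<eta> V T v th
        \<le> - c * ((norm V)\<^sup>2 + (norm T)\<^sup>2 + (norm th)\<^sup>2)"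
      by (simp add: algebra_simps)
  qed
qed

lemma G_rate_bound:
  assumes "0 < \<alpha>" "0 < \<gamma>" "0 < l1" "0 \<le> \<mu>"
  obtains K where "0 < K"
    "\<And>P q V T v :: 'h::real_inner. l1 * (norm v)\<^sup>2 \<le> (norm V)\<^sup>2 \<Longrightarrow>
       G_rate \<alpha> \<gamma> \<eta> \<mu> P q V T v
         \<le> - (norm q)\<^sup>2 / 2 - \<gamma> / (4 * \<alpha>) * (norm P)\<^sup>2 + K * ((norm V)\<^sup>2 + (norm T)\<^sup>2)"
proof -
  define C where "C = (2 * \<gamma> + \<mu>) / \<alpha>"
  define KV where "KV = 2 * \<alpha>\<^sup>2 / l1 + C\<^sup>2 * \<alpha> / (2 * \<gamma>) + \<bar>\<eta>\<bar>"
  define KT where "KT = \<bar>\<eta>\<bar> + \<eta>\<^sup>2 * \<alpha> / \<gamma>"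
  have "0 < KV" "0 \<le> KT" using assms by (simp_all add: KV_def KT_def add_pos_nonneg)
  show ?thesis
  proof (rule that[of "KV + KT"])
    show "0 < KV + KT" using \<open>0 < KV\<close> \<open>0 \<le> KT\<close> by simp
    fix P q V T v :: 'h
    assume v: "l1 * (norm v)\<^sup>2 \<le> (norm V)\<^sup>2"
    have vq: "(2 * \<alpha>) * inner v q \<le> 2 * \<alpha>\<^sup>2 * (norm v)\<^sup>2 + 1/2 * (norm q)\<^sup>2"
      by (intro inner_le_weighted_squares) (simp_all add: power2_eq_square)
    have vV: "2 * \<alpha>\<^sup>2 * (norm v)\<^sup>2 \<le> 2 * \<alpha>\<^sup>2 / l1 * (norm V)\<^sup>2"
      using mult_left_mono[OF v, of "2 * \<alpha>\<^sup>2 / l1"] assms by (simp add: field_simps)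
    have VP: "C * inner V P \<le> C\<^sup>2 * \<alpha> / (2 * \<gamma>) * (norm V)\<^sup>2 + \<gamma> / (2 * \<alpha>) * (norm P)\<^sup>2"
      using assms by (intro inner_le_weighted_squares) (simp_all add: power2_eq_square)
    have VT: "(- 2 * \<eta>) * inner V T \<le> \<bar>\<eta>\<bar> * (norm V)\<^sup>2 + \<bar>\<eta>\<bar> * (norm T)\<^sup>2"
      by (intro inner_le_weighted_squares) (simp_all add: power2_eq_square)
    have PT: "\<eta> * inner P T \<le> \<gamma> / (4 * \<alpha>) * (norm P)\<^sup>2 + \<eta>\<^sup>2 * \<alpha> / \<gamma> * (norm T)\<^sup>2"
      using assms by (intro inner_le_weighted_squares) (simp_all add: power2_eq_square)
    have "0 \<le> 2 * \<mu> / \<alpha> * (norm V)\<^sup>2" using assms by simp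
    have "G_rate \<alpha> \<gamma> \<eta> \<mu> P q V T v = - (norm q)\<^sup>2 + (2 * \<alpha>) * inner v q + C * inner V P
        - 2 * \<mu> / \<alpha> * (norm V)\<^sup>2 + (- 2 * \<eta>) * inner V T - \<gamma> / \<alpha> * (norm P)\<^sup>2 + \<eta> * inner P T"
      by (simp add: G_rate_def C_def)
    also have "\<dots> \<le> - (norm q)\<^sup>2 + (2 * \<alpha>\<^sup>2 / l1 * (norm V)\<^sup>2 + 1/2 * (norm q)\<^sup>2)
        + (C\<^sup>2 * \<alpha> / (2 * \<gamma>) * (norm V)\<^sup>2 + \<gamma> / (2 * \<alpha>) * (norm P)\<^sup>2)
        + (\<bar>\<eta>\<bar> * (norm V)\<^sup>2 + \<bar>\<eta>\<bar> * (norm T)\<^sup>2) - \<gamma> / \<alpha> * (norm P)\<^sup>2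
        + (\<gamma> / (4 * \<alpha>) * (norm P)\<^sup>2 + \<eta>\<^sup>2 * \<alpha> / \<gamma> * (norm T)\<^sup>2)"
      using vq vV VP VT PT \<open>0 \<le> 2 * \<mu> / \<alpha> * (norm V)\<^sup>2\<close> by linarith
    also have "\<dots> = - (norm q)\<^sup>2 / 2 - \<gamma> / (4 * \<alpha>) * (norm P)\<^sup>2 + KV * (norm V)\<^sup>2 + KT * (norm T)\<^sup>2"
      using assms by (simp add: KV_def KT_def field_simps)
    also have "\<dots> \<le> - (norm q)\<^sup>2 / 2 - \<gamma> / (4 * \<alpha>) * (norm P)\<^sup>2 + (KV + KT) * ((norm V)\<^sup>2 + (norm T)\<^sup>2)"
      using \<open>0 < KV\<close> \<open>0 \<le> KT\<close> by (simp add: algebra_simps)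
    finally show "G_rate \<alpha> \<gamma> \<eta> \<mu> P q V T v
        \<le> - (norm q)\<^sup>2 / 2 - \<gamma> / (4 * \<alpha>) * (norm P)\<^sup>2 + (KV + KT) * ((norm V)\<^sup>2 + (norm T)\<^sup>2)" .
  qed
qed

lemma L_rate_absorbs_energy:
  fixes P q V T v th :: "'h::real_inner"
  assumes WF: "W_rate \<mu> \<kappa> V T + \<rho> * F_rate \<alpha> \<kappa> \<eta> V T v th
      \<le> - c * ((norm V)\<^sup>2 + (norm T)\<^sup>2 + (norm th)\<^sup>2)"
    and G: "G_rate \<alpha> \<gamma> \<eta> \<mu> P q V T v
      \<le> - (norm q)\<^sup>2 / 2 - \<gamma> / (4 * \<alpha>) * (norm P)\<^sup>2 + K * ((norm V)\<^sup>2 + (norm T)\<^sup>2)"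
    and "0 < c" "\<epsilon>\<^sup>2 * K \<le> c / 2"
    and \<omega>: "\<omega> \<le> \<epsilon>\<^sup>2" "\<omega> \<le> \<epsilon>\<^sup>2 * \<gamma> / (2 * \<alpha>)" "\<omega> \<le> c"
  shows "L_rate \<alpha> \<gamma> \<kappa> \<eta> \<mu> \<rho> \<epsilon> P q V T v th + \<omega> * E_state P q V th \<le> 0"
proof -
  have "\<epsilon>\<^sup>2 * G_rate \<alpha> \<gamma> \<eta> \<mu> P q V T v
      \<le> \<epsilon>\<^sup>2 * (- (norm q)\<^sup>2 / 2 - \<gamma> / (4 * \<alpha>) * (norm P)\<^sup>2 + K * ((norm V)\<^sup>2 + (norm T)\<^sup>2))"
    using G by (rule mult_left_mono) simp
  also have "\<dots> = - (\<epsilon>\<^sup>2 * (norm q)\<^sup>2) / 2 - \<epsilon>\<^sup>2 * \<gamma> / (2 * \<alpha>) * (norm P)\<^sup>2 / 2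
      + \<epsilon>\<^sup>2 * K * ((norm V)\<^sup>2 + (norm T)\<^sup>2)"
    by (simp add: field_simps)
  also have "\<dots> \<le> - (\<omega> * (norm q)\<^sup>2) / 2 - \<omega> * (norm P)\<^sup>2 / 2 + c / 2 * ((norm V)\<^sup>2 + (norm T)\<^sup>2)"
  proof -
    have "\<omega> * (norm q)\<^sup>2 \<le> \<epsilon>\<^sup>2 * (norm q)\<^sup>2" using \<omega>(1) by (rule mult_right_mono) simp
    moreover have "\<omega> * (norm P)\<^sup>2 \<le> \<epsilon>\<^sup>2 * \<gamma> / (2 * \<alpha>) * (norm P)\<^sup>2"
      using \<omega>(2) by (rule mult_right_mono) simp
    moreover have "\<epsilon>\<^sup>2 * K * ((norm V)\<^sup>2 + (norm T)\<^sup>2) \<le> c / 2 * ((norm V)\<^sup>2 + (norm T)\<^sup>2)"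
      using \<open>\<epsilon>\<^sup>2 * K \<le> c / 2\<close> by (rule mult_right_mono) simp
    ultimately show ?thesis by argo
  qed
  finally have "\<epsilon>\<^sup>2 * G_rate \<alpha> \<gamma> \<eta> \<mu> P q V T v
      \<le> - (\<omega> * (norm q)\<^sup>2) / 2 - \<omega> * (norm P)\<^sup>2 / 2 + c / 2 * ((norm V)\<^sup>2 + (norm T)\<^sup>2)" .
  moreover have "\<omega> * (norm V)\<^sup>2 \<le> c * (norm V)\<^sup>2" "\<omega> * (norm th)\<^sup>2 \<le> c * (norm th)\<^sup>2"
    using \<omega>(3) by (intro mult_right_mono; simp)+
  moreover have "0 \<le> c * (norm T)\<^sup>2" "0 \<le> c * (norm th)\<^sup>2" using \<open>0 < c\<close> by simp_all
  ultimately show ?thesis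
    using WF unfolding L_rate_def E_state_def by (simp add: algebra_simps)
qed

lemma L_rate_bound:
  assumes "0 < \<alpha>" "0 < \<gamma>" "0 < \<kappa>" "0 < l1" "0 \<le> \<mu>" "tfun \<alpha> l1 \<kappa> * \<mu> < \<eta>\<^sup>2"
  shows "\<exists>\<rho>>0. \<exists>\<epsilon>0>0. \<forall>\<epsilon>. 0 < \<epsilon> \<and> \<epsilon> < \<epsilon>0 \<longrightarrow> (\<exists>\<omega>>0. \<forall>(P::'h::real_inner) q V T v th.
     l1 * (norm v)\<^sup>2 \<le> (norm V)\<^sup>2 \<longrightarrow> l1 * (norm th)\<^sup>2 \<le> (norm T)\<^sup>2 \<longrightarrow>
     L_rate \<alpha> \<gamma> \<kappa> \<eta> \<mu> \<rho> \<epsilon> P q V T v th + \<omega> * E_state P q V th \<le> 0)"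
proof -
  obtain \<rho> c where "0 < \<rho>" "0 < c" and WF: "\<And>V T v th :: 'h. l1 * (norm v)\<^sup>2 \<le> (norm V)\<^sup>2 \<Longrightarrow>
      l1 * (norm th)\<^sup>2 \<le> (norm T)\<^sup>2 \<Longrightarrow>
      W_rate \<mu> \<kappa> V T + \<rho> * F_rate \<alpha> \<kappa> \<eta> V T v th \<le> - c * ((norm V)\<^sup>2 + (norm T)\<^sup>2 + (norm th)\<^sup>2)"
    using WF_rate_coercive[of \<alpha> \<kappa> l1 \<mu> \<eta>] assms by blast
  obtain K where "0 < K" and G: "\<And>P q V T v :: 'h. l1 * (norm v)\<^sup>2 \<le> (norm V)\<^sup>2 \<Longrightarrow>
      G_rate \<alpha> \<gamma> \<eta> \<mu> P q V T v
        \<le> - (norm q)\<^sup>2 / 2 - \<gamma> / (4 * \<alpha>) * (norm P)\<^sup>2 + K * ((norm V)\<^sup>2 + (norm T)\<^sup>2)"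
    using G_rate_bound[of \<alpha> \<gamma> l1 \<mu> \<eta>] assms by blast
  define \<epsilon>0 where "\<epsilon>0 = min 1 (c / (2 * K))"
  have "0 < \<epsilon>0" using \<open>0 < c\<close> \<open>0 < K\<close> by (simp add: \<epsilon>0_def)
  have decay: "\<forall>\<epsilon>. 0 < \<epsilon> \<and> \<epsilon> < \<epsilon>0 \<longrightarrow> (\<exists>\<omega>>0. \<forall>(P::'h) q V T v th.
      l1 * (norm v)\<^sup>2 \<le> (norm V)\<^sup>2 \<longrightarrow> l1 * (norm th)\<^sup>2 \<le> (norm T)\<^sup>2 \<longrightarrow>
      L_rate \<alpha> \<gamma> \<kappa> \<eta> \<mu> \<rho> \<epsilon> P q V T v th + \<omega> * E_state P q V th \<le> 0)"
  proof (intro allI impI)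
    fix \<epsilon> :: real
    assume \<epsilon>: "0 < \<epsilon> \<and> \<epsilon> < \<epsilon>0"
    have "\<epsilon>\<^sup>2 \<le> \<epsilon>"
      using mult_left_mono[of \<epsilon> 1 \<epsilon>] \<epsilon> by (simp add: \<epsilon>0_def power2_eq_square)
    then have "\<epsilon>\<^sup>2 * K \<le> \<epsilon> * K" using \<open>0 < K\<close> by (simp add: mult_right_mono)
    also have "\<dots> \<le> c / 2" using \<epsilon> \<open>0 < K\<close> by (simp add: \<epsilon>0_def field_simps)
    finally have "\<epsilon>\<^sup>2 * K \<le> c / 2" .
    define \<omega> where "\<omega> = min (min (\<epsilon>\<^sup>2) (\<epsilon>\<^sup>2 * \<gamma> / (2 * \<alpha>))) c"
    have "0 < \<omega>" using \<epsilon> \<open>0 < c\<close> assms by (simp add: \<omega>_def)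
    have bound: "L_rate \<alpha> \<gamma> \<kappa> \<eta> \<mu> \<rho> \<epsilon> P q V T v th + \<omega> * E_state P q V th \<le> 0"
      if "l1 * (norm v)\<^sup>2 \<le> (norm V)\<^sup>2" "l1 * (norm th)\<^sup>2 \<le> (norm T)\<^sup>2" for P q V T v th :: 'h
      using \<open>0 < c\<close> \<open>\<epsilon>\<^sup>2 * K \<le> c / 2\<close>
      by (rule L_rate_absorbs_energy[OF WF[OF that] G[OF that(1)]]) (simp_all add: \<omega>_def)
    show "\<exists>\<omega>>0. \<forall>(P::'h) q V T v th.
        l1 * (norm v)\<^sup>2 \<le> (norm V)\<^sup>2 \<longrightarrow> l1 * (norm th)\<^sup>2 \<le> (norm T)\<^sup>2 \<longrightarrow>
        L_rate \<alpha> \<gamma> \<kappa> \<eta> \<mu> \<rho> \<epsilon> P q V T v th + \<omega> * E_state P q V th \<le> 0"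
      by (intro exI[of _ \<omega>] conjI allI impI \<open>0 < \<omega>\<close> bound)
  qed
  show ?thesis
    by (rule exI[of _ \<rho>], rule conjI[OF \<open>0 < \<rho>\<close>], rule exI[of _ \<epsilon>0], rule conjI[OF \<open>0 < \<epsilon>0\<close> decay])
qed

theorem lemma7p4:
  fixes DA DS :: "'h::{real_inner,complete_space} set"
    and A S :: "'h \<Rightarrow> 'h"
    and \<alpha> \<beta> \<gamma> \<kappa> \<eta> l1 :: real
  assumes A_sa: "selfadjoint_op DA A"
    and A_pos: "strictly_positive_op DA A"
    and l1_spec: "l1 \<in> op_spectrum DA A"
    and l1_min: "\<forall>l\<in>op_spectrum DA A. l1 \<le> l"
    and l1_pos: "l1 > 0"
    and S_sa: "selfadjoint_op DS S"
    and S_pos: "positive_op DS S"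
    and S_dom: "DA = {x \<in> DS. S x \<in> DS}"
    and S_sq: "\<forall>x\<in>DA. A x = S (S x)"
    and \<alpha>_pos: "\<alpha> > 0" and \<beta>_pos: "\<beta> > 0" and \<gamma>_pos: "\<gamma> > 0" and \<kappa>_pos: "\<kappa> > 0"
    and \<mu>_nonneg: "\<gamma> - \<alpha> * \<beta> \<ge> 0"
    and \<eta>_big: "\<eta>\<^sup>2 > tfun \<alpha> l1 \<kappa> * (\<gamma> - \<alpha> * \<beta>)"
  shows "\<exists>\<rho>>0. \<exists>\<epsilon>0>0. \<forall>\<epsilon>. 0 < \<epsilon> \<and> \<epsilon> < \<epsilon>0 \<longrightarrow>
     (\<exists>\<omega>>0. \<forall>u v w th. regular_solution DA A DS S \<alpha> \<beta> \<gamma> \<kappa> \<eta> u v w th \<longrightarrow>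
        (\<forall>t\<ge>0. \<exists>L'.
           ((\<lambda>s. Lfun DS S \<alpha> \<beta> \<gamma> \<eta> \<rho> \<epsilon> (u s) (v s) (w s) (th s)) has_real_derivative L')
              (at t within {0..}) \<and>
           L' + \<omega> * Efun S \<alpha> (u t) (v t) (w t) (th t) \<le> 0))"
proof -
  interpret coercive_square_root DA DS A S l1
    using A_sa A_pos l1_min l1_pos S_sa S_dom S_sq by unfold_locales
  have "\<alpha> \<noteq> 0" "\<kappa> \<noteq> 0" using \<alpha>_pos \<kappa>_pos by simp_all
  obtain \<rho> \<epsilon>0 where "0 < \<rho>" "0 < \<epsilon>0" and rate: "\<forall>\<epsilon>. 0 < \<epsilon> \<and> \<epsilon> < \<epsilon>0 \<longrightarrow>
      (\<exists>\<omega>>0. \<forall>(P::'h) q V T v th. l1 * (norm v)\<^sup>2 \<le> (norm V)\<^sup>2 \<longrightarrow> l1 * (norm th)\<^sup>2 \<le> (norm T)\<^sup>2 \<longrightarrow>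
        L_rate \<alpha> \<gamma> \<kappa> \<eta> (\<gamma> - \<alpha> * \<beta>) \<rho> \<epsilon> P q V T v th + \<omega> * E_state P q V th \<le> 0)"
    using L_rate_bound[OF \<alpha>_pos \<gamma>_pos \<kappa>_pos l1_pos \<mu>_nonneg \<eta>_big] by (elim exE conjE)
  have decay: "\<forall>\<epsilon>. 0 < \<epsilon> \<and> \<epsilon> < \<epsilon>0 \<longrightarrow> (\<exists>\<omega>>0. \<forall>u v w th. regular_solution DA A DS S \<alpha> \<beta> \<gamma> \<kappa> \<eta> u v w th \<longrightarrow>
      (\<forall>t\<ge>0. \<exists>L'. ((\<lambda>s. Lfun DS S \<alpha> \<beta> \<gamma> \<eta> \<rho> \<epsilon> (u s) (v s) (w s) (th s)) has_real_derivative L')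
          (at t within {0..}) \<and> L' + \<omega> * Efun S \<alpha> (u t) (v t) (w t) (th t) \<le> 0))"
    using Lfun_dissipation[OF \<open>\<alpha> \<noteq> 0\<close> \<open>\<kappa> \<noteq> 0\<close>] rate by (intro allI impI) (elim allE impE)
  show ?thesis
    by (rule exI[of _ \<rho>], rule conjI[OF \<open>0 < \<rho>\<close>], rule exI[of _ \<epsilon>0], rule conjI[OF \<open>0 < \<epsilon>0\<close> decay])
qed

end
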